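(* Let $k$ be a field of characteristic zero and ${\boldsymbol\lambda}\in M_n(k)$ antisymmetric. Then $k_{\boldsymbol\lambda}(x_1,\dots,x_n)$ is not isomorphic (as a Poisson algebra over $k$) to a Poisson-Weyl field. In fact, it is not isomorphic to any Poisson field containing elements $x,y$ with $\{x,y\}=1$.
   Context: $k_{\boldsymbol\lambda}(x_1,\dots,x_n)$ is the rational function field $k(x_1,\dots,x_n)$ with the unique Poisson bracket with $\{x_i,x_j\}=\lambda_{ij}x_ix_j$. A Poisson-Weyl field is a rational function field $L(u_1,\dots,u_m,v_1,\dots,v_m)$, with $m\ge1$ and $L$ a field extension of $k$, equipped with the unique $L$-linear Poisson bracket satisfying $\{u_i,u_j\}=\{v_i,v_j\}=0$ and $\{u_i,v_j\}=\delta_{ij}$ for all $i,j$. *)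

theory Defs
  imports Main
begin

text \<open>A field F together with an embedding of the base field k (F is a k-algebra).\<close>
definition field_embedding :: "('k::field \<Rightarrow> 'a::field) \<Rightarrow> bool" where
  "field_embedding \<iota> \<longleftrightarrow> \<iota> 1 = 1 \<and> (\<forall>a b. \<iota> (a + b) = \<iota> a + \<iota> b) \<and> (\<forall>a b. \<iota> (a * b) = \<iota> a * \<iota> b)"

definition monom_eval :: "nat \<Rightarrow> (nat \<Rightarrow> 'a::comm_ring_1) \<Rightarrow> (nat \<Rightarrow> nat) \<Rightarrow> 'a" where
  "monom_eval n x m = (\<Prod>i<n. x i ^ m i)"

definition poly_eval :: "('k \<Rightarrow> 'a::comm_ring_1) \<Rightarrow> nat \<Rightarrow> (nat \<Rightarrow> 'a) \<Rightarrow> (nat \<Rightarrow> nat) set \<Rightarrow> ((nat \<Rightarrow> nat) \<Rightarrow> 'k) \<Rightarrow> 'a" where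
  "poly_eval \<iota> n x M c = (\<Sum>m\<in>M. \<iota> (c m) * monom_eval n x m)"

definition exponents :: "nat \<Rightarrow> (nat \<Rightarrow> nat) set" where
  "exponents n = {m. \<forall>i\<ge>n. m i = 0}"

text \<open>F = k(x_0,...,x_{n-1}): x algebraically independent over k and every element of F
  is a quotient of two polynomials in the x_i with coefficients in k.\<close>
definition rational_function_field :: "('k::field \<Rightarrow> 'a::field) \<Rightarrow> nat \<Rightarrow> (nat \<Rightarrow> 'a) \<Rightarrow> bool" where
  "rational_function_field \<iota> n x \<longleftrightarrow>
     field_embedding \<iota> \<and>
     (\<forall>M c. finite M \<and> M \<subseteq> exponents n \<and> poly_eval \<iota> n x M c = 0 \<longrightarrow> (\<forall>m\<in>M. c m = 0)) \<and>
     (\<forall>f. \<exists>M c N d. finite M \<and> M \<subseteq> exponents n \<and> finite N \<and> N \<subseteq> exponents n \<and>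
            poly_eval \<iota> n x N d \<noteq> 0 \<and> f = poly_eval \<iota> n x M c / poly_eval \<iota> n x N d)"

definition poisson_bracket :: "('k::field \<Rightarrow> 'a::field) \<Rightarrow> ('a \<Rightarrow> 'a \<Rightarrow> 'a) \<Rightarrow> bool" where
  "poisson_bracket \<iota> br \<longleftrightarrow>
     (\<forall>a b c. br (a + b) c = br a c + br b c) \<and>
     (\<forall>t a b. br (\<iota> t * a) b = \<iota> t * br a b) \<and>
     (\<forall>a b. br a b = - br b a) \<and>
     (\<forall>a b c. br a (br b c) + br b (br c a) + br c (br a b) = 0) \<and>
     (\<forall>a b c. br a (b * c) = br a b * c + b * br a c)"

definition poisson_field :: "('k::field \<Rightarrow> 'a::field) \<Rightarrow> ('a \<Rightarrow> 'a \<Rightarrow> 'a) \<Rightarrow> bool" where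
  "poisson_field \<iota> br \<longleftrightarrow> field_embedding \<iota> \<and> poisson_bracket \<iota> br"

definition poisson_iso :: "('k \<Rightarrow> 'a::field) \<Rightarrow> ('a \<Rightarrow> 'a \<Rightarrow> 'a) \<Rightarrow> ('k \<Rightarrow> 'b::field) \<Rightarrow> ('b \<Rightarrow> 'b \<Rightarrow> 'b) \<Rightarrow> ('a \<Rightarrow> 'b) \<Rightarrow> bool" where
  "poisson_iso \<iota>1 br1 \<iota>2 br2 \<phi> \<longleftrightarrow>
     bij \<phi> \<and> (\<forall>a b. \<phi> (a + b) = \<phi> a + \<phi> b) \<and> (\<forall>a b. \<phi> (a * b) = \<phi> a * \<phi> b) \<and>
     (\<forall>t. \<phi> (\<iota>1 t) = \<iota>2 t) \<and> (\<forall>a b. \<phi> (br1 a b) = br2 (\<phi> a) (\<phi> b))"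

definition lambda_bracket :: "('k \<Rightarrow> 'a::field) \<Rightarrow> nat \<Rightarrow> (nat \<Rightarrow> 'a) \<Rightarrow> (nat \<Rightarrow> nat \<Rightarrow> 'k) \<Rightarrow> ('a \<Rightarrow> 'a \<Rightarrow> 'a) \<Rightarrow> bool" where
  "lambda_bracket \<iota> n x lam br \<longleftrightarrow> (\<forall>i<n. \<forall>j<n. br (x i) (x j) = \<iota> (lam i j) * x i * x j)"

end

theory Submission
  imports Defs "HOL-Computational_Algebra.Formal_Laurent_Series"
begin

text \<open>
  Let \<open>D\<^sub>i = x\<^sub>i \<partial>/\<partial>x\<^sub>i\<close> be the Euler derivations of \<open>k(x\<^sub>1,\<dots>,x\<^sub>n)\<close>. Both arguments of
  \<open>{f, g}\<close> are derivations, so the bracket is determined by \<open>{x\<^sub>i, x\<^sub>j} = \<lambda>\<^sub>i\<^sub>j x\<^sub>i x\<^sub>j\<close>: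
  \<open>{f, g} = \<Sum>\<^sub>i\<^sub>j \<lambda>\<^sub>i\<^sub>j D\<^sub>i f D\<^sub>j g\<close>. Since the \<open>D\<^sub>i\<close> commute, \<open>\<lambda>\<close> is antisymmetric and
  \<open>2 \<noteq> 0\<close>, this is the divergence \<open>\<Sum>\<^sub>i D\<^sub>i (f \<Sum>\<^sub>j \<lambda>\<^sub>i\<^sub>j D\<^sub>j g)\<close>. But \<open>1\<close> is no such
  divergence: the constant coefficient of the Laurent expansion in \<open>x\<^sub>j\<close> maps \<open>1\<close> to \<open>1\<close>,
  kills \<open>D\<^sub>j h\<close> and commutes with \<open>D\<^sub>i\<close> for \<open>i \<noteq> j\<close>, so by induction on the number of
  summands the equation reduces to \<open>0 = 1\<close>.
\<close>

unbundle fps_syntax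

definition ring_hom :: "('a::comm_ring_1 \<Rightarrow> 'b::comm_ring_1) \<Rightarrow> bool" where
  "ring_hom h \<longleftrightarrow> h 1 = 1 \<and> (\<forall>a b. h (a + b) = h a + h b) \<and> (\<forall>a b. h (a * b) = h a * h b)"

lemma ring_homD:
  assumes "ring_hom h"
  shows ring_hom_1: "h 1 = 1" and ring_hom_add: "h (a + b) = h a + h b"
    and ring_hom_mult: "h (a * b) = h a * h b"
  using assms by (auto simp: ring_hom_def)

lemma ring_hom_0: "ring_hom h \<Longrightarrow> h 0 = 0"
  using ring_hom_add[of h 0 0] by simp

lemma ring_hom_uminus: "ring_hom h \<Longrightarrow> h (- a) = - h a"
  using ring_hom_add[of h a "- a"] ring_hom_0[of h] by (metis add.right_inverse neg_eq_iff_add_eq_0)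

lemma ring_hom_sum: "ring_hom h \<Longrightarrow> h (\<Sum>i\<in>A. f i) = (\<Sum>i\<in>A. h (f i))"
  by (induct A rule: infinite_finite_induct) (auto simp: ring_hom_0 ring_hom_add)

lemma ring_hom_prod: "ring_hom h \<Longrightarrow> h (\<Prod>i\<in>A. f i) = (\<Prod>i\<in>A. h (f i))"
  by (induct A rule: infinite_finite_induct) (auto simp: ring_hom_1 ring_hom_mult)

lemma ring_hom_power: "ring_hom h \<Longrightarrow> h (a ^ k) = h a ^ k"
  by (induct k) (auto simp: ring_hom_1 ring_hom_mult)

lemma ring_hom_id: "ring_hom id"
  by (simp add: ring_hom_def)

lemma ring_hom_nonzero:
  fixes h :: "'a::field \<Rightarrow> 'b::field"
  assumes "ring_hom h" "a \<noteq> 0"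
  shows "h a \<noteq> 0"
proof
  assume "h a = 0"
  then have "h (a * inverse a) = 0" by (simp add: ring_hom_mult[OF assms(1)])
  with assms show False by (simp add: ring_hom_1)
qed

lemma field_embedding_iff_ring_hom: "field_embedding \<iota> \<longleftrightarrow> ring_hom \<iota>"
  by (simp add: field_embedding_def ring_hom_def)

text \<open>Derivations along a homomorphism \<open>\<psi>\<close> (not just \<open>\<psi> = id\<close>) are needed to compare
  derivations of a field with its Laurent expansions.\<close>
definition derivation :: "('a::comm_ring_1 \<Rightarrow> 'b::comm_ring_1) \<Rightarrow> ('a \<Rightarrow> 'b) \<Rightarrow> bool" where
  "derivation \<psi> \<delta> \<longleftrightarrow>
     (\<forall>a b. \<delta> (a + b) = \<delta> a + \<delta> b) \<and> (\<forall>a b. \<delta> (a * b) = \<psi> a * \<delta> b + \<psi> b * \<delta> a)"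

lemma derivationD:
  assumes "derivation \<psi> \<delta>"
  shows derivation_add: "\<delta> (a + b) = \<delta> a + \<delta> b"
    and derivation_mult: "\<delta> (a * b) = \<psi> a * \<delta> b + \<psi> b * \<delta> a"
  using assms by (auto simp: derivation_def)

lemma derivation_0: "derivation \<psi> \<delta> \<Longrightarrow> \<delta> 0 = 0"
  using derivation_add[of \<psi> \<delta> 0 0] by simp

lemma derivation_1: "derivation \<psi> \<delta> \<Longrightarrow> ring_hom \<psi> \<Longrightarrow> \<delta> 1 = 0"
  using derivation_mult[of \<psi> \<delta> 1 1] by (simp add: ring_hom_1)

lemma derivation_sum: "derivation \<psi> \<delta> \<Longrightarrow> \<delta> (\<Sum>i\<in>A. f i) = (\<Sum>i\<in>A. \<delta> (f i))"
  by (induct A rule: infinite_finite_induct) (auto simp: derivation_0 derivation_add)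

lemma derivation_diff:
  "derivation \<psi> \<delta>\<^sub>1 \<Longrightarrow> derivation \<psi> \<delta>\<^sub>2 \<Longrightarrow> derivation \<psi> (\<lambda>a. \<delta>\<^sub>1 a - \<delta>\<^sub>2 a)"
  unfolding derivation_def by (auto simp: algebra_simps)

lemma derivation_commutator:
  "derivation id \<delta>\<^sub>1 \<Longrightarrow> derivation id \<delta>\<^sub>2 \<Longrightarrow> derivation id (\<lambda>a. \<delta>\<^sub>1 (\<delta>\<^sub>2 a) - \<delta>\<^sub>2 (\<delta>\<^sub>1 a))"
  unfolding derivation_def by (auto simp: algebra_simps)

lemma poisson_bracket_derivation_right:
  assumes "poisson_bracket \<iota> br"
  shows "derivation id (br a)"
proof -
  have add: "br (b + c) a = br b a + br c a" and anti: "br a b = - br b a"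
    and leibniz: "br a (b * c) = br a b * c + b * br a c" for a b c
    using assms unfolding poisson_bracket_def by blast+
  have "br a (b + c) = br a b + br a c" for b c
    using add[of b c a] anti[of a "b + c"] anti[of a b] anti[of a c] by simp
  then show ?thesis
    unfolding derivation_def by (simp add: leibniz mult.commute)
qed

lemma poisson_bracket_derivation_left:
  assumes "poisson_bracket \<iota> br"
  shows "derivation id (\<lambda>a. br a b)"
proof -
  have anti: "br a b = - br b a" for a b
    using assms unfolding poisson_bracket_def by blast
  have "derivation id (\<lambda>a. - br b a)"
    using poisson_bracket_derivation_right[OF assms, of b]
    unfolding derivation_def by (simp add: algebra_simps)
  moreover have "(\<lambda>a. br a b) = (\<lambda>a. - br b a)" using anti by blast
  ultimately show ?thesis by simp
qed

lemma poisson_bracket_const: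
  assumes "poisson_bracket \<iota> br"
  shows "br (\<iota> t) a = 0" and "br a (\<iota> t) = 0"
proof -
  have lin: "br (\<iota> t * 1) a = \<iota> t * br 1 a" and anti: "br a b = - br b a" for a b
    using assms unfolding poisson_bracket_def by blast+
  have "br a 1 = 0" for a
    using derivation_1[OF poisson_bracket_derivation_right[OF assms] ring_hom_id] .
  then show "br (\<iota> t) a = 0"
    using lin[of a] anti[of 1 a] by simp
  then show "br a (\<iota> t) = 0"
    using anti[of a "\<iota> t"] by simp
qed

lemma poisson_iso_bracket_eq_1:
  assumes "poisson_iso \<iota> br \<iota>' br' \<phi>" "field_embedding \<iota>" "field_embedding \<iota>'" "br' a b = 1"
  shows "br (inv \<phi> a) (inv \<phi> b) = 1"
proof -
  have bij: "bij \<phi>" and bracket: "\<phi> (br f g) = br' (\<phi> f) (\<phi> g)" and const: "\<phi> (\<iota> t) = \<iota>' t" for f g t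
    using assms(1) by (auto simp: poisson_iso_def)
  have "\<phi> 1 = 1"
    using const[of 1] assms(2,3) by (simp add: field_embedding_def)
  moreover have "\<phi> (br (inv \<phi> a) (inv \<phi> b)) = 1"
    using bracket assms(4) bij by (simp add: bij_is_surj surj_f_inv_f)
  ultimately show ?thesis using bij by (metis bij_is_inj injD)
qed

lemma poly_eval_ring_hom:
  "ring_hom h \<Longrightarrow> h (poly_eval e n y M c) = poly_eval (h \<circ> e) n (h \<circ> y) M c"
  unfolding poly_eval_def monom_eval_def
  by (simp add: ring_hom_sum ring_hom_mult ring_hom_prod ring_hom_power)

lemma poly_eval_extend_zero:
  assumes "ring_hom e" "finite N" "M \<subseteq> N"
  shows "poly_eval e n y N (\<lambda>m. if m \<in> M then c m else 0) = poly_eval e n y M c"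
  unfolding poly_eval_def using assms by (intro sum.mono_neutral_cong_right) (auto simp: ring_hom_0)

lemma poly_eval_add:
  assumes "ring_hom e" "finite M" "finite N"
  shows "poly_eval e n y (M \<union> N) (\<lambda>m. (if m \<in> M then c m else 0) + (if m \<in> N then d m else 0)) =
    poly_eval e n y M c + poly_eval e n y N d"
proof -
  have "poly_eval e n y (M \<union> N) (\<lambda>m. (if m \<in> M then c m else 0) + (if m \<in> N then d m else 0)) =
     poly_eval e n y (M \<union> N) (\<lambda>m. if m \<in> M then c m else 0) +
     poly_eval e n y (M \<union> N) (\<lambda>m. if m \<in> N then d m else 0)"
    unfolding poly_eval_def by (simp add: ring_hom_add[OF assms(1)] distrib_right sum.distrib)
  then show ?thesis using poly_eval_extend_zero[OF assms(1), of "M \<union> N"] assms by simp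
qed

lemma poly_eval_uminus:
  "ring_hom e \<Longrightarrow> poly_eval e n y M (\<lambda>m. - c m) = - poly_eval e n y M c"
  unfolding poly_eval_def by (simp add: ring_hom_uminus sum_negf)

lemma monom_eval_add: "monom_eval n y (\<lambda>i. m i + l i) = monom_eval n y m * monom_eval n y l"
  unfolding monom_eval_def by (simp add: power_add prod.distrib)

definition exponents_add :: "(nat \<Rightarrow> nat) set \<Rightarrow> (nat \<Rightarrow> nat) set \<Rightarrow> (nat \<Rightarrow> nat) set" where
  "exponents_add M N = (\<lambda>(m, l) i. m i + l i) ` (M \<times> N)"

definition coeffs_mult ::
  "(nat \<Rightarrow> nat) set \<Rightarrow> ((nat \<Rightarrow> nat) \<Rightarrow> 'k::comm_ring_1) \<Rightarrow> (nat \<Rightarrow> nat) set \<Rightarrow>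
    ((nat \<Rightarrow> nat) \<Rightarrow> 'k) \<Rightarrow> (nat \<Rightarrow> nat) \<Rightarrow> 'k" where
  "coeffs_mult M c N d s = (\<Sum>(m, l)\<in>{(m, l) \<in> M \<times> N. (\<lambda>i. m i + l i) = s}. c m * d l)"

lemma exponents_add_subset:
  "M \<subseteq> exponents n \<Longrightarrow> N \<subseteq> exponents n \<Longrightarrow> exponents_add M N \<subseteq> exponents n"
  by (auto simp: exponents_add_def exponents_def)

lemma finite_exponents_add: "finite M \<Longrightarrow> finite N \<Longrightarrow> finite (exponents_add M N)"
  by (simp add: exponents_add_def)

lemma poly_eval_mult:
  assumes "ring_hom e" "finite M" "finite N"
  shows "poly_eval e n y (exponents_add M N) (coeffs_mult M c N d) =
    poly_eval e n y M c * poly_eval e n y N d"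
proof -
  let ?sum = "\<lambda>(m, l) i. m i + l i :: nat"
  let ?term = "\<lambda>(m, l). e (c m) * e (d l) * monom_eval n y (?sum (m, l))"
  have "poly_eval e n y M c * poly_eval e n y N d = (\<Sum>p\<in>M \<times> N. ?term p)"
    unfolding poly_eval_def sum_product sum.cartesian_product
    by (intro sum.cong) (auto simp: monom_eval_add ac_simps)
  also have "\<dots> = (\<Sum>s\<in>exponents_add M N. \<Sum>p\<in>{p \<in> M \<times> N. ?sum p = s}. ?term p)"
    using assms by (intro sum.group[symmetric]) (auto simp: exponents_add_def)
  also have "\<dots> = poly_eval e n y (exponents_add M N) (coeffs_mult M c N d)"
    unfolding poly_eval_def coeffs_mult_def
    by (intro sum.cong refl)
      (auto simp: ring_hom_sum[OF assms(1)] ring_hom_mult[OF assms(1)] sum_distrib_right intro!: sum.cong)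
  finally show ?thesis by simp
qed

section \<open>Homomorphisms out of a rational function field\<close>

locale rat_fun_field =
  fixes \<iota> :: "'k::field \<Rightarrow> 'f::field" and n :: nat and x :: "nat \<Rightarrow> 'f"
  assumes rational_function_field: "rational_function_field \<iota> n x"
begin

lemma ring_hom_iota: "ring_hom \<iota>"
  using rational_function_field by (simp add: rational_function_field_def field_embedding_iff_ring_hom)

lemma algebraically_independent:
  "finite M \<Longrightarrow> M \<subseteq> exponents n \<Longrightarrow> poly_eval \<iota> n x M c = 0 \<Longrightarrow> m \<in> M \<Longrightarrow> c m = 0"
  using rational_function_field unfolding rational_function_field_def by blast

lemma quotient_of_polys:
  "\<exists>M c N d. finite M \<and> M \<subseteq> exponents n \<and> finite N \<and> N \<subseteq> exponents n \<and>
     poly_eval \<iota> n x N d \<noteq> 0 \<and> f = poly_eval \<iota> n x M c / poly_eval \<iota> n x N d"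
  using rational_function_field unfolding rational_function_field_def by blast

text \<open>Algebraic independence of \<open>x\<close> makes this relation the graph of
  a ring homomorphism on \<open>k[x]\<close>.\<close>
definition poly_pairs :: "('k \<Rightarrow> 'a::comm_ring_1) \<Rightarrow> (nat \<Rightarrow> 'a) \<Rightarrow> ('f \<times> 'a) set" where
  "poly_pairs e y =
     {(poly_eval \<iota> n x M c, poly_eval e n y M c) | M c. finite M \<and> M \<subseteq> exponents n}"

lemma poly_pairsE:
  assumes "(a, b) \<in> poly_pairs e y"
  obtains M c where "finite M" "M \<subseteq> exponents n"
    "a = poly_eval \<iota> n x M c" "b = poly_eval e n y M c"
  using assms by (auto simp: poly_pairs_def)

lemma poly_pairs_add:
  assumes "ring_hom e" "(a, b) \<in> poly_pairs e y" "(a', b') \<in> poly_pairs e y"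
  shows "(a + a', b + b') \<in> poly_pairs e y"
proof -
  obtain M c where "finite M" "M \<subseteq> exponents n" "a = poly_eval \<iota> n x M c" "b = poly_eval e n y M c"
    using assms(2) by (rule poly_pairsE)
  moreover obtain N d where "finite N" "N \<subseteq> exponents n"
    "a' = poly_eval \<iota> n x N d" "b' = poly_eval e n y N d"
    using assms(3) by (rule poly_pairsE)
  ultimately show ?thesis
    unfolding poly_pairs_def
    by (intro CollectI exI[of _ "M \<union> N"]
        exI[of _ "\<lambda>m. (if m \<in> M then c m else 0) + (if m \<in> N then d m else 0)"])
      (simp add: poly_eval_add[OF ring_hom_iota] poly_eval_add[OF assms(1)])
qed

lemma poly_pairs_uminus:
  assumes "ring_hom e" "(a, b) \<in> poly_pairs e y"
  shows "(- a, - b) \<in> poly_pairs e y"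
proof -
  obtain M c where "finite M" "M \<subseteq> exponents n" "a = poly_eval \<iota> n x M c" "b = poly_eval e n y M c"
    using assms(2) by (rule poly_pairsE)
  then show ?thesis
    unfolding poly_pairs_def
    by (intro CollectI exI[of _ M] exI[of _ "\<lambda>m. - c m"])
      (simp add: poly_eval_uminus[OF ring_hom_iota] poly_eval_uminus[OF assms(1)])
qed

lemma poly_pairs_mult:
  assumes "ring_hom e" "(a, b) \<in> poly_pairs e y" "(a', b') \<in> poly_pairs e y"
  shows "(a * a', b * b') \<in> poly_pairs e y"
proof -
  obtain M c where "finite M" "M \<subseteq> exponents n" "a = poly_eval \<iota> n x M c" "b = poly_eval e n y M c"
    using assms(2) by (rule poly_pairsE)
  moreover obtain N d where "finite N" "N \<subseteq> exponents n"
    "a' = poly_eval \<iota> n x N d" "b' = poly_eval e n y N d"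
    using assms(3) by (rule poly_pairsE)
  ultimately show ?thesis
    unfolding poly_pairs_def
    by (intro CollectI exI[of _ "exponents_add M N"] exI[of _ "coeffs_mult M c N d"])
      (simp add: poly_eval_mult[OF ring_hom_iota] poly_eval_mult[OF assms(1)]
        exponents_add_subset finite_exponents_add)
qed

lemma poly_pairs_zero:
  assumes "ring_hom e" "(0, b) \<in> poly_pairs e y"
  shows "b = 0"
proof -
  obtain M c where M: "finite M" "M \<subseteq> exponents n" "0 = poly_eval \<iota> n x M c"
    and b: "b = poly_eval e n y M c"
    using assms(2) by (rule poly_pairsE)
  have "c m = 0" if "m \<in> M" for m
    using algebraically_independent[OF M(1,2) M(3)[symmetric] that] .
  then show ?thesis using b by (simp add: poly_eval_def ring_hom_0[OF assms(1)])
qed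

lemma poly_pairs_unique:
  assumes "ring_hom e" "(a, b) \<in> poly_pairs e y" "(a, b') \<in> poly_pairs e y"
  shows "b = b'"
proof -
  have "(0, b + - b') \<in> poly_pairs e y"
    using poly_pairs_add[OF assms(1,2) poly_pairs_uminus[OF assms(1,3)]] by simp
  then have "b + - b' = 0" by (rule poly_pairs_zero[OF assms(1)])
  then show ?thesis by simp
qed

lemma poly_pairs_const: "(\<iota> t, e t) \<in> poly_pairs e y"
  unfolding poly_pairs_def
  by (intro CollectI exI[of _ "{\<lambda>_. 0}"] exI[of _ "\<lambda>_. t"])
    (simp add: poly_eval_def monom_eval_def exponents_def)

lemma poly_pairs_1: "ring_hom e \<Longrightarrow> (1, 1) \<in> poly_pairs e y"
  using poly_pairs_const[of 1 e y] by (simp add: ring_hom_1 ring_hom_iota)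

lemma poly_pairs_var:
  assumes "ring_hom e" "i < n"
  shows "(x i, y i) \<in> poly_pairs e y"
proof -
  let ?m = "\<lambda>l. if l = i then 1 else 0 :: nat"
  have monom: "monom_eval n z ?m = z i" for z :: "nat \<Rightarrow> 'b::comm_ring_1"
    unfolding monom_eval_def using assms(2) by (simp add: if_distrib cong: if_cong)
  show ?thesis
    unfolding poly_pairs_def
    by (intro CollectI exI[of _ "{?m}"] exI[of _ "\<lambda>_. 1"])
      (use assms in \<open>auto simp: poly_eval_def monom exponents_def
        ring_hom_1[OF assms(1)] ring_hom_1[OF ring_hom_iota]\<close>)
qed

lemma poly_pairs_quotient:
  "\<exists>p p' q q'. (p, p') \<in> poly_pairs e y \<and> (q, q') \<in> poly_pairs e y \<and> q \<noteq> 0 \<and> f = p / q"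
  using quotient_of_polys[of f] unfolding poly_pairs_def by blast

end

text \<open>The target need not be a field (for Taylor expansions it is \<open>F[[\<epsilon>]]\<close>), so only the
  images of nonzero polynomials are required to be invertible.\<close>
locale rat_fun_field_hom_ext = rat_fun_field \<iota> n x for \<iota> :: "'k::field \<Rightarrow> 'f::field" and n x +
  fixes e :: "'k \<Rightarrow> 'a::{comm_ring_1, inverse}" and y :: "nat \<Rightarrow> 'a"
  assumes ring_hom_e: "ring_hom e"
    and poly_pairs_invertible:
      "\<And>q q'. (q, q') \<in> poly_pairs e y \<Longrightarrow> q \<noteq> 0 \<Longrightarrow> q' * inverse q' = 1"
begin

definition hom_ext :: "'f \<Rightarrow> 'a" where
  "hom_ext f = (SOME v. \<exists>p p' q q'. (p, p') \<in> poly_pairs e y \<and> (q, q') \<in> poly_pairs e y \<and>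
     q \<noteq> 0 \<and> f = p / q \<and> v = p' * inverse q')"

lemma hom_ext_quotient:
  assumes p: "(p, p') \<in> poly_pairs e y" and q: "(q, q') \<in> poly_pairs e y" "q \<noteq> 0"
  shows "hom_ext (p / q) = p' * inverse q'"
proof -
  obtain p\<^sub>0 p\<^sub>0' q\<^sub>0 q\<^sub>0' where p\<^sub>0: "(p\<^sub>0, p\<^sub>0') \<in> poly_pairs e y"
    and q\<^sub>0: "(q\<^sub>0, q\<^sub>0') \<in> poly_pairs e y" "q\<^sub>0 \<noteq> 0"
    and eq: "p / q = p\<^sub>0 / q\<^sub>0" and ext: "hom_ext (p / q) = p\<^sub>0' * inverse q\<^sub>0'"
    using someI_ex[of "\<lambda>v. \<exists>p\<^sub>0 p\<^sub>0' q\<^sub>0 q\<^sub>0'. (p\<^sub>0, p\<^sub>0') \<in> poly_pairs e y \<and>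
      (q\<^sub>0, q\<^sub>0') \<in> poly_pairs e y \<and> q\<^sub>0 \<noteq> 0 \<and> p / q = p\<^sub>0 / q\<^sub>0 \<and> v = p\<^sub>0' * inverse q\<^sub>0'"]
      p q unfolding hom_ext_def by blast
  have "p\<^sub>0 * q = p * q\<^sub>0" using eq q(2) q\<^sub>0(2) by (simp add: field_simps)
  then have cross: "p\<^sub>0' * q' = p' * q\<^sub>0'"
    using poly_pairs_unique[OF ring_hom_e poly_pairs_mult[OF ring_hom_e p\<^sub>0 q(1)]]
      poly_pairs_mult[OF ring_hom_e p q\<^sub>0(1)] by metis
  have "p\<^sub>0' * inverse q\<^sub>0' = p\<^sub>0' * inverse q\<^sub>0' * (q' * inverse q')"
    using poly_pairs_invertible[OF q] by simp
  also have "\<dots> = (p\<^sub>0' * q') * inverse q\<^sub>0' * inverse q'" by (simp add: ac_simps)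
  also have "\<dots> = p' * (q\<^sub>0' * inverse q\<^sub>0') * inverse q'" by (simp add: cross ac_simps)
  finally show ?thesis using ext poly_pairs_invertible[OF q\<^sub>0] by simp
qed

lemma hom_ext_poly: "(p, p') \<in> poly_pairs e y \<Longrightarrow> hom_ext p = p'"
  using hom_ext_quotient[OF _ poly_pairs_1[OF ring_hom_e] one_neq_zero]
    poly_pairs_invertible[OF poly_pairs_1[OF ring_hom_e] one_neq_zero] by simp

lemma hom_ext_obtain_quotient:
  obtains p p' q q' where "(p, p') \<in> poly_pairs e y" "(q, q') \<in> poly_pairs e y" "q \<noteq> 0"
    "f = p / q" "hom_ext f = p' * inverse q'"
  using poly_pairs_quotient[of e y f] hom_ext_quotient by blast

lemma inverse_mult_poly_pairs:
  assumes "(q, q') \<in> poly_pairs e y" "q \<noteq> 0" "(s, s') \<in> poly_pairs e y" "s \<noteq> 0"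
  shows "inverse (q' * s') = inverse q' * inverse s'"
proof -
  have "q' * s' * inverse (q' * s') = 1"
    using poly_pairs_invertible[OF poly_pairs_mult[OF ring_hom_e assms(1,3)]] assms(2,4) by simp
  moreover have "q' * s' * (inverse q' * inverse s') = 1"
    using poly_pairs_invertible[OF assms(1,2)] poly_pairs_invertible[OF assms(3,4)]
    by (metis mult.assoc mult.left_commute mult_1_right)
  ultimately show ?thesis by (metis mult.assoc mult.commute mult_1_left)
qed

lemma hom_ext_add: "hom_ext (f + g) = hom_ext f + hom_ext g"
proof -
  obtain p p' q q' where p: "(p, p') \<in> poly_pairs e y" and q: "(q, q') \<in> poly_pairs e y" "q \<noteq> 0"
    and f: "f = p / q" "hom_ext f = p' * inverse q'"
    by (rule hom_ext_obtain_quotient)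
  obtain r r' s s' where r: "(r, r') \<in> poly_pairs e y" and s: "(s, s') \<in> poly_pairs e y" "s \<noteq> 0"
    and g: "g = r / s" "hom_ext g = r' * inverse s'"
    by (rule hom_ext_obtain_quotient)
  have "f + g = (p * s + r * q) / (q * s)" using f g q s by (simp add: field_simps)
  then have "hom_ext (f + g) = (p' * s' + r' * q') * inverse (q' * s')"
    using hom_ext_quotient[OF poly_pairs_add[OF ring_hom_e poly_pairs_mult[OF ring_hom_e p s(1)]
      poly_pairs_mult[OF ring_hom_e r q(1)]] poly_pairs_mult[OF ring_hom_e q(1) s(1)]] q s by simp
  also have "\<dots> = p' * inverse q' * (s' * inverse s') + r' * inverse s' * (q' * inverse q')"
    by (simp add: inverse_mult_poly_pairs[OF q s] algebra_simps)
  finally show ?thesis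
    using f g poly_pairs_invertible[OF q] poly_pairs_invertible[OF s] by simp
qed

lemma hom_ext_mult: "hom_ext (f * g) = hom_ext f * hom_ext g"
proof -
  obtain p p' q q' where p: "(p, p') \<in> poly_pairs e y" and q: "(q, q') \<in> poly_pairs e y" "q \<noteq> 0"
    and f: "f = p / q" "hom_ext f = p' * inverse q'"
    by (rule hom_ext_obtain_quotient)
  obtain r r' s s' where r: "(r, r') \<in> poly_pairs e y" and s: "(s, s') \<in> poly_pairs e y" "s \<noteq> 0"
    and g: "g = r / s" "hom_ext g = r' * inverse s'"
    by (rule hom_ext_obtain_quotient)
  have "f * g = (p * r) / (q * s)" using f g by simp
  then have "hom_ext (f * g) = (p' * r') * inverse (q' * s')"
    using hom_ext_quotient[OF poly_pairs_mult[OF ring_hom_e p r]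
      poly_pairs_mult[OF ring_hom_e q(1) s(1)]] q s by simp
  then show ?thesis using f g by (simp add: inverse_mult_poly_pairs[OF q s] ac_simps)
qed

lemma ring_hom_hom_ext: "ring_hom hom_ext"
  unfolding ring_hom_def
  using hom_ext_poly[OF poly_pairs_1[OF ring_hom_e]] hom_ext_add hom_ext_mult by blast

lemma hom_ext_const: "hom_ext (\<iota> t) = e t"
  using hom_ext_poly[OF poly_pairs_const] .

lemma hom_ext_var: "i < n \<Longrightarrow> hom_ext (x i) = y i"
  using hom_ext_poly[OF poly_pairs_var[OF ring_hom_e]] .

end

context rat_fun_field
begin

lemma derivation_eq_0:
  fixes \<psi> :: "'f \<Rightarrow> 'a::field"
  assumes \<psi>: "ring_hom \<psi>" and \<delta>: "derivation \<psi> \<delta>"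
    and const: "\<And>t. \<delta> (\<iota> t) = 0" and var: "\<And>i. i < n \<Longrightarrow> \<delta> (x i) = 0"
  shows "\<delta> f = 0"
proof -
  have power: "\<delta> (x i ^ k) = 0" if "i < n" for i k
    using that by (induct k) (auto simp: derivation_mult[OF \<delta>] derivation_1[OF \<delta> \<psi>] var)
  have "\<delta> (\<Prod>i\<in>A. x i ^ m i) = 0" if "A \<subseteq> {..<n}" for A m
    using that by (induct A rule: infinite_finite_induct)
      (auto simp: derivation_1[OF \<delta> \<psi>] derivation_mult[OF \<delta>] power)
  then have poly: "\<delta> (poly_eval \<iota> n x M c) = 0" for M c
    unfolding poly_eval_def monom_eval_def
    by (simp add: derivation_sum[OF \<delta>] derivation_mult[OF \<delta>] const)
  obtain M c N d where q: "poly_eval \<iota> n x N d \<noteq> 0"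
    and f: "f = poly_eval \<iota> n x M c / poly_eval \<iota> n x N d"
    using quotient_of_polys[of f] by blast
  have "\<delta> (f * poly_eval \<iota> n x N d) = \<psi> (poly_eval \<iota> n x N d) * \<delta> f"
    by (simp add: derivation_mult[OF \<delta>] poly)
  moreover have "f * poly_eval \<iota> n x N d = poly_eval \<iota> n x M c" using f q by simp
  ultimately show ?thesis using ring_hom_nonzero[OF \<psi> q] poly by simp
qed

lemma derivation_eqI:
  fixes \<psi> :: "'f \<Rightarrow> 'a::field"
  assumes "ring_hom \<psi>" "derivation \<psi> \<delta>\<^sub>1" "derivation \<psi> \<delta>\<^sub>2"
    and "\<And>t. \<delta>\<^sub>1 (\<iota> t) = \<delta>\<^sub>2 (\<iota> t)" "\<And>i. i < n \<Longrightarrow> \<delta>\<^sub>1 (x i) = \<delta>\<^sub>2 (x i)"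
  shows "\<delta>\<^sub>1 f = \<delta>\<^sub>2 f"
  using derivation_eq_0[OF assms(1) derivation_diff[OF assms(2,3)]] assms(4,5) by simp

section \<open>Euler derivations\<close>

text \<open>The substitution \<open>x \<mapsto> x + \<epsilon> e\<^sub>i\<close> into \<open>F[[\<epsilon>]]\<close>; its first-order coefficient is
  \<open>\<partial>/\<partial>x\<^sub>i\<close>.\<close>
definition taylor_var :: "nat \<Rightarrow> nat \<Rightarrow> 'f fps" where
  "taylor_var i l = fps_const (x l) + (if l = i then fps_X else 0)"

lemma poly_pairs_taylor_nth_0:
  assumes "(q, q') \<in> poly_pairs (fps_const \<circ> \<iota>) (taylor_var i)"
  shows "q' $ 0 = q"
proof -
  have ring_hom_nth_0: "ring_hom (\<lambda>s::'f fps. s $ 0)" by (simp add: ring_hom_def)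
  obtain M c where "q = poly_eval \<iota> n x M c" "q' = poly_eval (fps_const \<circ> \<iota>) n (taylor_var i) M c"
    using assms by (rule poly_pairsE)
  moreover have "(\<lambda>s. s $ 0) \<circ> (fps_const \<circ> \<iota>) = \<iota>" "(\<lambda>s. s $ 0) \<circ> taylor_var i = x"
    by (auto simp: fun_eq_iff taylor_var_def)
  ultimately show ?thesis using poly_eval_ring_hom[OF ring_hom_nth_0] by metis
qed

lemma taylor_hom_ext: "rat_fun_field_hom_ext \<iota> n x (fps_const \<circ> \<iota>) (taylor_var i)"
proof unfold_locales
  show "ring_hom (fps_const \<circ> \<iota>)"
    using ring_hom_iota by (simp add: ring_hom_def)
  show "q' * inverse q' = 1"
    if "(q, q') \<in> poly_pairs (fps_const \<circ> \<iota>) (taylor_var i)" "q \<noteq> 0" for q q'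
    using that poly_pairs_taylor_nth_0 inverse_mult_eq_1' by metis
qed

definition taylor :: "nat \<Rightarrow> 'f \<Rightarrow> 'f fps" where
  "taylor i = rat_fun_field_hom_ext.hom_ext \<iota> n x (fps_const \<circ> \<iota>) (taylor_var i)"

lemma ring_hom_taylor: "ring_hom (taylor i)"
  unfolding taylor_def using rat_fun_field_hom_ext.ring_hom_hom_ext[OF taylor_hom_ext] .

lemma taylor_nth_0: "taylor i f $ 0 = f"
proof -
  interpret T: rat_fun_field_hom_ext \<iota> n x "fps_const \<circ> \<iota>" "taylor_var i"
    by (rule taylor_hom_ext)
  obtain p p' q q' where p: "(p, p') \<in> poly_pairs (fps_const \<circ> \<iota>) (taylor_var i)"
    and q: "(q, q') \<in> poly_pairs (fps_const \<circ> \<iota>) (taylor_var i)" "q \<noteq> 0"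
    and "f = p / q" "T.hom_ext f = p' * inverse q'"
    by (rule T.hom_ext_obtain_quotient)
  then show ?thesis
    using poly_pairs_taylor_nth_0[OF p] poly_pairs_taylor_nth_0[OF q(1)] q(2)
    unfolding taylor_def by (simp add: field_simps)
qed

lemma taylor_const: "taylor i (\<iota> t) = fps_const (\<iota> t)"
  unfolding taylor_def using rat_fun_field_hom_ext.hom_ext_const[OF taylor_hom_ext] by simp

lemma taylor_x: "l < n \<Longrightarrow> taylor i (x l) = taylor_var i l"
  unfolding taylor_def using rat_fun_field_hom_ext.hom_ext_var[OF taylor_hom_ext] by simp

definition euler :: "nat \<Rightarrow> 'f \<Rightarrow> 'f" where
  "euler i f = x i * taylor i f $ 1"

lemma derivation_euler: "derivation id (euler i)"
  unfolding derivation_def euler_def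
  by (auto simp: ring_hom_add[OF ring_hom_taylor] ring_hom_mult[OF ring_hom_taylor]
      fps_mult_nth_1 taylor_nth_0 algebra_simps)

lemma euler_0: "euler i 0 = 0"
  using derivation_0[OF derivation_euler] .

lemma euler_const: "euler i (\<iota> t) = 0"
  by (simp add: euler_def taylor_const)

lemma euler_1: "euler i 1 = 0"
  using euler_const[of i 1] by (simp add: ring_hom_1[OF ring_hom_iota])

lemma euler_var: "l < n \<Longrightarrow> euler i (x l) = (if l = i then x l else 0)"
  by (simp add: euler_def taylor_x taylor_var_def)

lemma euler_add: "euler i (a + b) = euler i a + euler i b"
  using derivation_add[OF derivation_euler] .

lemma euler_mult: "euler i (a * b) = a * euler i b + b * euler i a"
  using derivation_mult[OF derivation_euler] by simp

lemma euler_sum: "euler i (\<Sum>j\<in>A. f j) = (\<Sum>j\<in>A. euler i (f j))"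
  using derivation_sum[OF derivation_euler] .

lemma euler_commute: "euler i (euler j f) = euler j (euler i f)"
  using derivation_eq_0[OF ring_hom_id derivation_commutator[OF derivation_euler derivation_euler],
      of i j f]
  by (auto simp: euler_const euler_0 euler_var)

end

section \<open>Constant coefficients of Laurent expansions\<close>

definition fls_map_coeffs :: "('a::field \<Rightarrow> 'a) \<Rightarrow> 'a fls \<Rightarrow> 'a fls" where
  "fls_map_coeffs d s = Abs_fls (\<lambda>k. d (s $$ k))"

lemma fls_map_coeffs_nth: "d 0 = 0 \<Longrightarrow> fls_map_coeffs d s $$ k = d (s $$ k)"
  unfolding fls_map_coeffs_def by (rule nth_Abs_fls_lower_bound[of "fls_subdegree s"]) simp

lemma fls_map_coeffs_const: "d 0 = 0 \<Longrightarrow> fls_map_coeffs d (fls_const a) = fls_const (d a)"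
  by (simp add: fls_eq_iff fls_map_coeffs_nth)

lemma fls_map_coeffs_X: "d 0 = 0 \<Longrightarrow> d 1 = 0 \<Longrightarrow> fls_map_coeffs d fls_X = 0"
  by (simp add: fls_eq_iff fls_map_coeffs_nth)

lemma fls_times_nth_lower_bounds:
  fixes f g :: "'a::field fls"
  assumes "\<forall>k<a. f $$ k = 0" "\<forall>k<b. g $$ k = 0"
  shows "(f * g) $$ n = (\<Sum>i=a..n-b. f $$ i * g $$ (n - i))"
proof (cases "f = 0 \<or> g = 0")
  case False
  then have "a \<le> fls_subdegree f" "b \<le> fls_subdegree g"
    using assms nth_fls_subdegree_nonzero not_le by metis+
  then show ?thesis
    unfolding fls_times_nth(2)
    by (intro sum.mono_neutral_left) (auto simp: not_le dest: fls_eq0_below_subdegree)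
qed auto

lemma derivation_fls_map_coeffs:
  fixes d :: "'a::field \<Rightarrow> 'a"
  assumes d: "derivation id d"
  shows "derivation id (fls_map_coeffs d)"
  unfolding derivation_def
proof (intro conjI allI)
  have d0: "d 0 = 0" using derivation_0[OF d] .
  fix s t :: "'a fls"
  show "fls_map_coeffs d (s + t) = fls_map_coeffs d s + fls_map_coeffs d t"
    by (simp add: fls_eq_iff fls_map_coeffs_nth[of d, OF d0] derivation_add[OF d])
  let ?a = "fls_subdegree s" and ?b = "fls_subdegree t"
  have s: "\<forall>k<?a. s $$ k = 0" "\<forall>k<?a. fls_map_coeffs d s $$ k = 0"
    and t: "\<forall>k<?b. t $$ k = 0" "\<forall>k<?b. fls_map_coeffs d t $$ k = 0"
    by (auto simp: fls_map_coeffs_nth[of d, OF d0] d0)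
  have lhs: "fls_map_coeffs d (s * t) $$ k =
      (\<Sum>i=?a..k-?b. s $$ i * d (t $$ (k - i))) + (\<Sum>i=?a..k-?b. d (s $$ i) * t $$ (k - i))" for k
    by (simp add: fls_map_coeffs_nth[of d, OF d0] fls_times_nth_lower_bounds[OF s(1) t(1)]
        derivation_sum[OF d] derivation_mult[OF d] sum.distrib mult.commute)
  have rhs: "(s * fls_map_coeffs d t + fls_map_coeffs d s * t) $$ k =
      (\<Sum>i=?a..k-?b. s $$ i * d (t $$ (k - i))) + (\<Sum>i=?a..k-?b. d (s $$ i) * t $$ (k - i))" for k
    by (simp add: fls_map_coeffs_nth[of d, OF d0]
        fls_times_nth_lower_bounds[OF s(1) t(2)] fls_times_nth_lower_bounds[OF s(2) t(1)])
  show "fls_map_coeffs d (s * t) = id s * fls_map_coeffs d t + id t * fls_map_coeffs d s"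
    using lhs rhs by (simp add: fls_eq_iff mult.commute)
qed

definition poly_to_fls :: "'a::field poly \<Rightarrow> 'a fls" where
  "poly_to_fls p = fps_to_fls (fps_of_poly p)"

lemma ring_hom_poly_to_fls: "ring_hom poly_to_fls"
  by (simp add: ring_hom_def poly_to_fls_def fps_of_poly_add fps_of_poly_mult fls_times_fps_to_fls)

context rat_fun_field
begin

text \<open>It factors through \<open>F[X]\<close>, and evaluating at \<open>X = x\<^sub>j\<close> shows that it does not kill
  nonzero polynomials.\<close>
definition laurent_var :: "nat \<Rightarrow> nat \<Rightarrow> 'f fls" where
  "laurent_var j l = (if l = j then fls_X else fls_const (x l))"

lemma poly_pairs_laurent_nonzero:
  assumes "(q, q') \<in> poly_pairs (fls_const \<circ> \<iota>) (laurent_var j)" "q \<noteq> 0"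
  shows "q' \<noteq> 0"
proof
  assume "q' = 0"
  obtain M c where q: "q = poly_eval \<iota> n x M c"
    and q': "q' = poly_eval (fls_const \<circ> \<iota>) n (laurent_var j) M c"
    using assms(1) by (rule poly_pairsE)
  define P where "P = poly_eval (\<lambda>t. [:\<iota> t:]) n (\<lambda>l. if l = j then [:0, 1:] else [:x l:]) M c"
  have "poly_to_fls \<circ> (\<lambda>t. [:\<iota> t:]) = fls_const \<circ> \<iota>"
    "poly_to_fls \<circ> (\<lambda>l. if l = j then [:0, 1:] else [:x l:]) = laurent_var j"
    by (auto simp: fun_eq_iff poly_to_fls_def fps_of_poly_const laurent_var_def)
  then have "poly_to_fls P = q'"
    unfolding P_def q' by (simp add: poly_eval_ring_hom[OF ring_hom_poly_to_fls])
  then have "P = 0" using \<open>q' = 0\<close> by (simp add: poly_to_fls_def)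
  have ring_hom_poly_at: "ring_hom (\<lambda>p. poly p (x j))" by (simp add: ring_hom_def)
  have "(\<lambda>p. poly p (x j)) \<circ> (\<lambda>t. [:\<iota> t:]) = \<iota>"
    "(\<lambda>p. poly p (x j)) \<circ> (\<lambda>l. if l = j then [:0, 1:] else [:x l:]) = x"
    by (auto simp: fun_eq_iff)
  then have "poly P (x j) = q"
    unfolding P_def q by (simp add: poly_eval_ring_hom[OF ring_hom_poly_at])
  with \<open>P = 0\<close> assms(2) show False by simp
qed

lemma laurent_hom_ext: "rat_fun_field_hom_ext \<iota> n x (fls_const \<circ> \<iota>) (laurent_var j)"
proof unfold_locales
  show "ring_hom (fls_const \<circ> \<iota>)"
    using ring_hom_iota by (auto simp: ring_hom_def fls_plus_const fls_const_mult_const)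
  show "q' * inverse q' = 1"
    if "(q, q') \<in> poly_pairs (fls_const \<circ> \<iota>) (laurent_var j)" "q \<noteq> 0" for q q'
    using poly_pairs_laurent_nonzero[OF that] by simp
qed

definition laurent :: "nat \<Rightarrow> 'f \<Rightarrow> 'f fls" where
  "laurent j = rat_fun_field_hom_ext.hom_ext \<iota> n x (fls_const \<circ> \<iota>) (laurent_var j)"

lemma ring_hom_laurent: "ring_hom (laurent j)"
  unfolding laurent_def using rat_fun_field_hom_ext.ring_hom_hom_ext[OF laurent_hom_ext] .

lemma laurent_const: "laurent j (\<iota> t) = fls_const (\<iota> t)"
  unfolding laurent_def using rat_fun_field_hom_ext.hom_ext_const[OF laurent_hom_ext] by simp

lemma laurent_x: "l < n \<Longrightarrow> laurent j (x l) = laurent_var j l"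
  unfolding laurent_def using rat_fun_field_hom_ext.hom_ext_var[OF laurent_hom_ext] by simp

lemma derivation_laurent_comp:
  "derivation id \<delta> \<Longrightarrow> derivation (laurent j) (\<lambda>h. laurent j (\<delta> h))"
  unfolding derivation_def by (simp add: ring_hom_add[OF ring_hom_laurent] ring_hom_mult[OF ring_hom_laurent])

lemma laurent_euler_other:
  assumes "i \<noteq> j"
  shows "laurent j (euler i h) = fls_map_coeffs (euler i) (laurent j h)"
proof (rule derivation_eqI[OF ring_hom_laurent derivation_laurent_comp[OF derivation_euler]])
  show "derivation (laurent j) (\<lambda>h. fls_map_coeffs (euler i) (laurent j h))"
    using derivation_fls_map_coeffs[OF derivation_euler[of i]]
    unfolding derivation_def by (simp add: ring_hom_add[OF ring_hom_laurent] ring_hom_mult[OF ring_hom_laurent])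
  show "laurent j (euler i (\<iota> t)) = fls_map_coeffs (euler i) (laurent j (\<iota> t))" for t
    by (simp add: euler_const laurent_const fls_map_coeffs_const euler_0 ring_hom_0[OF ring_hom_laurent])
  show "laurent j (euler i (x l)) = fls_map_coeffs (euler i) (laurent j (x l))" if "l < n" for l
    using that assms
    by (auto simp: euler_var laurent_x laurent_var_def fls_map_coeffs_X fls_map_coeffs_const
        euler_0 euler_1 ring_hom_0[OF ring_hom_laurent])
qed

lemma laurent_euler_same: "laurent j (euler j h) = fls_X * fls_deriv (laurent j h)"
proof (rule derivation_eqI[OF ring_hom_laurent derivation_laurent_comp[OF derivation_euler]])
  show "derivation (laurent j) (\<lambda>h. fls_X * fls_deriv (laurent j h))"
    unfolding derivation_def
    by (simp add: ring_hom_add[OF ring_hom_laurent] ring_hom_mult[OF ring_hom_laurent] algebra_simps)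
  show "laurent j (euler j (\<iota> t)) = fls_X * fls_deriv (laurent j (\<iota> t))" for t
    by (simp add: euler_const laurent_const ring_hom_0[OF ring_hom_laurent])
  show "laurent j (euler j (x l)) = fls_X * fls_deriv (laurent j (x l))" if "l < n" for l
    using that by (auto simp: euler_var laurent_x laurent_var_def ring_hom_0[OF ring_hom_laurent])
qed

definition const_coeff :: "nat \<Rightarrow> 'f \<Rightarrow> 'f" where
  "const_coeff j h = laurent j h $$ 0"

lemma const_coeff_add: "const_coeff j (a + b) = const_coeff j a + const_coeff j b"
  by (simp add: const_coeff_def ring_hom_add[OF ring_hom_laurent])

lemma const_coeff_sum: "const_coeff j (\<Sum>i\<in>A. f i) = (\<Sum>i\<in>A. const_coeff j (f i))"
  by (simp add: const_coeff_def ring_hom_sum[OF ring_hom_laurent] fls_nth_sum)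

lemma const_coeff_1: "const_coeff j 1 = 1"
  by (simp add: const_coeff_def ring_hom_1[OF ring_hom_laurent])

lemma const_coeff_euler_same: "const_coeff j (euler j h) = 0"
  by (simp add: const_coeff_def laurent_euler_same fls_X_times_conv_shift fls_deriv_residue)

lemma const_coeff_euler_other: "i \<noteq> j \<Longrightarrow> const_coeff j (euler i h) = euler i (const_coeff j h)"
  by (simp add: const_coeff_def laurent_euler_other fls_map_coeffs_nth euler_0)

lemma sum_euler_neq_1: "m \<le> n \<Longrightarrow> (\<Sum>i<m. euler i (h i)) \<noteq> 1"
proof (induct m arbitrary: h)
  case (Suc m)
  show ?case
  proof
    assume "(\<Sum>i<Suc m. euler i (h i)) = 1"
    then have "const_coeff m (\<Sum>i<Suc m. euler i (h i)) = 1" by (simp add: const_coeff_1)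
    then have "(\<Sum>i<m. euler i (const_coeff m (h i))) = 1"
      by (simp add: const_coeff_add const_coeff_sum const_coeff_euler_same const_coeff_euler_other)
    with Suc show False by simp
  qed
qed simp

end

section \<open>Brackets of \<open>k\<^sub>\<lambda>(x\<^sub>1,\<dots>,x\<^sub>n)\<close> in divergence form\<close>

lemma sum_lessThan_mult_delta:
  fixes n :: nat and a :: "'a::comm_ring_1"
  assumes "l < n"
  shows "(\<Sum>i<n. c i * (if l = i then a else 0)) = c l * a"
proof -
  have "(\<Sum>i<n. c i * (if l = i then a else 0)) = (\<Sum>i<n. if l = i then c i * a else 0)"
    by (rule sum.cong) auto
  with assms show ?thesis by simp
qed

context rat_fun_field
begin

lemma lambda_bracket_var_right:
  assumes "poisson_bracket \<iota> br" "lambda_bracket \<iota> n x lam br" "j < n"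
  shows "br f (x j) = x j * (\<Sum>i<n. \<iota> (lam i j) * euler i f)"
proof (rule derivation_eqI[OF ring_hom_id poisson_bracket_derivation_left[OF assms(1)]])
  show "derivation id (\<lambda>f. x j * (\<Sum>i<n. \<iota> (lam i j) * euler i f))"
    unfolding derivation_def
    by (simp add: euler_add euler_mult sum.distrib sum_distrib_left algebra_simps)
  show "br (\<iota> t) (x j) = x j * (\<Sum>i<n. \<iota> (lam i j) * euler i (\<iota> t))" for t
    by (simp add: poisson_bracket_const[OF assms(1)] euler_const)
  show "br (x l) (x j) = x j * (\<Sum>i<n. \<iota> (lam i j) * euler i (x l))" if "l < n" for l
    using that assms(2,3) by (simp add: lambda_bracket_def euler_var sum_lessThan_mult_delta ac_simps)
qed

lemma lambda_bracket_euler_form: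
  assumes "poisson_bracket \<iota> br" "lambda_bracket \<iota> n x lam br"
  shows "br f g = (\<Sum>i<n. \<Sum>j<n. \<iota> (lam i j) * euler i f * euler j g)"
proof (rule derivation_eqI[OF ring_hom_id poisson_bracket_derivation_right[OF assms(1)]])
  show "derivation id (\<lambda>g. \<Sum>i<n. \<Sum>j<n. \<iota> (lam i j) * euler i f * euler j g)"
    unfolding derivation_def
    by (simp add: euler_add euler_mult sum.distrib sum_distrib_left algebra_simps)
  show "br f (\<iota> t) = (\<Sum>i<n. \<Sum>j<n. \<iota> (lam i j) * euler i f * euler j (\<iota> t))" for t
    by (simp add: poisson_bracket_const[OF assms(1)] euler_const)
  show "br f (x l) = (\<Sum>i<n. \<Sum>j<n. \<iota> (lam i j) * euler i f * euler j (x l))" if "l < n" for l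
  proof -
    have "(\<Sum>j<n. \<iota> (lam i j) * euler i f * euler j (x l)) = \<iota> (lam i l) * euler i f * x l" for i
      using that by (simp add: euler_var sum_lessThan_mult_delta)
    then show ?thesis
      using lambda_bracket_var_right[OF assms that] by (simp add: sum_distrib_left ac_simps)
  qed
qed

lemma antisymmetric_second_order_euler_sum:
  assumes antisym: "\<forall>i<n. \<forall>j<n. lam i j = - lam j i" and two: "(2::'f) \<noteq> 0"
  shows "(\<Sum>i<n. \<Sum>j<n. \<iota> (lam i j) * euler i (euler j g)) = 0"
proof -
  let ?T = "\<Sum>i<n. \<Sum>j<n. \<iota> (lam i j) * euler i (euler j g)"
  have "?T = (\<Sum>j<n. \<Sum>i<n. \<iota> (lam i j) * euler i (euler j g))"
    by (rule sum.swap)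
  also have "\<dots> = (\<Sum>j<n. \<Sum>i<n. - (\<iota> (lam j i) * euler j (euler i g)))"
  proof (intro sum.cong refl)
    fix i j
    assume "i \<in> {..<n}" "j \<in> {..<n}"
    then have "lam i j = - lam j i" using antisym by blast
    then show "\<iota> (lam i j) * euler i (euler j g) = - (\<iota> (lam j i) * euler j (euler i g))"
      by (simp only: ring_hom_uminus[OF ring_hom_iota] euler_commute[of i j] mult_minus_left)
  qed
  also have "\<dots> = - ?T"
    by (simp add: sum_negf)
  finally have "?T + ?T = 0"
    by (simp only: eq_neg_iff_add_eq_0)
  then have "2 * ?T = 0"
    by (simp only: mult_2)
  with two show ?thesis by simp
qed

lemma lambda_bracket_divergence_form:
  assumes "poisson_bracket \<iota> br" "lambda_bracket \<iota> n x lam br"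
    and "\<forall>i<n. \<forall>j<n. lam i j = - lam j i" "(2::'f) \<noteq> 0"
  shows "br f g = (\<Sum>i<n. euler i (f * (\<Sum>j<n. \<iota> (lam i j) * euler j g)))"
proof -
  have "euler i (f * (\<Sum>j<n. \<iota> (lam i j) * euler j g)) =
      f * (\<Sum>j<n. \<iota> (lam i j) * euler i (euler j g)) + (\<Sum>j<n. \<iota> (lam i j) * euler i f * euler j g)"
    for i
    by (simp add: euler_mult euler_sum euler_const sum.distrib sum_distrib_left ac_simps)
  then have "(\<Sum>i<n. euler i (f * (\<Sum>j<n. \<iota> (lam i j) * euler j g))) =
      f * (\<Sum>i<n. \<Sum>j<n. \<iota> (lam i j) * euler i (euler j g)) +
      (\<Sum>i<n. \<Sum>j<n. \<iota> (lam i j) * euler i f * euler j g)"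
    by (simp add: sum.distrib sum_distrib_left)
  then show ?thesis
    using antisymmetric_second_order_euler_sum[OF assms(3,4)] lambda_bracket_euler_form[OF assms(1,2)]
    by simp
qed

end

theorem corollary5p3:
  fixes \<iota> :: "'k::field_char_0 \<Rightarrow> 'f::field" and x :: "nat \<Rightarrow> 'f" and n :: nat
    and lam :: "nat \<Rightarrow> nat \<Rightarrow> 'k" and br :: "'f \<Rightarrow> 'f \<Rightarrow> 'f"
    and \<iota>' :: "'k \<Rightarrow> 'g::field" and br' :: "'g \<Rightarrow> 'g \<Rightarrow> 'g" and \<phi> :: "'f \<Rightarrow> 'g"
  assumes "\<forall>i<n. \<forall>j<n. lam i j = - lam j i"
    and "rational_function_field \<iota> n x"
    and "poisson_bracket \<iota> br"
    and "lambda_bracket \<iota> n x lam br"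
    and "poisson_field \<iota>' br'"
    and "poisson_iso \<iota> br \<iota>' br' \<phi>"
  shows "\<not> (\<exists>a b. br' a b = 1)"
proof
  assume "\<exists>a b. br' a b = 1"
  then obtain a b where "br' a b = 1" by blast
  interpret rat_fun_field \<iota> n x by (rule rat_fun_field.intro) fact
  have "field_embedding \<iota>" "field_embedding \<iota>'"
    using assms(2,5) by (simp_all add: rational_function_field_def poisson_field_def)
  then have bracket_1: "br (inv \<phi> a) (inv \<phi> b) = 1"
    using poisson_iso_bracket_eq_1[OF assms(6)] \<open>br' a b = 1\<close> by blast
  have "\<iota> 2 = 2"
    using ring_hom_add[OF ring_hom_iota, of 1 1] by (simp add: ring_hom_1[OF ring_hom_iota])
  then have "(2::'f) \<noteq> 0"
    using ring_hom_nonzero[OF ring_hom_iota, of 2] by simp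
  with bracket_1 lambda_bracket_divergence_form[OF assms(3,4,1)] sum_euler_neq_1[of n]
  show False by auto
qed

end
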